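(* Let $F$ be an SCF on $n$ voters and three alternatives. Then for every pair of distinct alternatives $a,b$, \[ M^{a,b}(F) \le 6 \sum_{i=1}^n M_i(F). \]
   Context: $L_3$ is the set of linear orders on three alternatives; an SCF is a map $F:(L_3)^n\to\{$alternatives$\}$. For a profile $x\in(L_3)^n$ and alternatives $a\ne b$, $x^{a,b}\in\{0,1\}^n$ is the vector with $x^{a,b}_i=1$ iff voter $i$ ranks $a$ above $b$. $M^{a,b}(F)=\Pr[F(x)=a,\ F(x')=b]$, where $x,x'$ are uniformly random profiles subject to the single restriction $x^{a,b}=x'^{a,b}$ (i.e. $x$ uniform and $x'$ uniform among profiles with the same $a$-vs-$b$ preferences). $M_i(F)$ is the probability that $x_i'$ is a profitable manipulation by voter $i$ at $x$ (i.e. voter $i$, according to $x_i$, strictly prefers $F(x_i',x_{-i})$ to $F(x)$), where $x_1,\dots,x_n,x_i'$ are independent uniform elements of $L_3$. *)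

theory Defs
  imports Complex_Main "HOL-Library.FuncSet"
begin

datatype alt = A1 | A2 | A3

lemma UNIV_alt: "(UNIV :: alt set) = {A1, A2, A3}"
  by (auto intro: alt.exhaust)

text \<open>A linear order on the alternatives is represented by the list of the three
alternatives from most preferred to least preferred.\<close>
definition L3 :: "alt list set" where
  "L3 = {r. distinct r \<and> set r = UNIV}"

definition prefers :: "alt list \<Rightarrow> alt \<Rightarrow> alt \<Rightarrow> bool" where
  "prefers r a b \<longleftrightarrow> (\<exists>i j. i < j \<and> j < length r \<and> r ! i = a \<and> r ! j = b)"

definition profiles :: "nat \<Rightarrow> (nat \<Rightarrow> alt list) set" where
  "profiles n = PiE {..<n} (\<lambda>_. L3)"

definition pairvec :: "nat \<Rightarrow> alt \<Rightarrow> alt \<Rightarrow> (nat \<Rightarrow> alt list) \<Rightarrow> nat \<Rightarrow> bool" where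
  "pairvec n a b x = (\<lambda>i. if i < n then prefers (x i) a b else False)"

text \<open>M^{a,b}(F) = Pr[F(x) = a and F(x') = b], x uniform, x' uniform among profiles
with the same a-vs-b vector as x.\<close>
definition Mab :: "nat \<Rightarrow> ((nat \<Rightarrow> alt list) \<Rightarrow> alt) \<Rightarrow> alt \<Rightarrow> alt \<Rightarrow> real" where
  "Mab n F a b =
     (\<Sum>x\<in>profiles n.
        (let S = {x' \<in> profiles n. pairvec n a b x' = pairvec n a b x} in
         real (card {x' \<in> S. F x = a \<and> F x' = b}) / real (card S)))
     / real (card (profiles n))"

text \<open>M_i(F): probability that x_i' is a profitable manipulation by voter i at x,
with x_1,...,x_n,x_i' independent uniform in L3.\<close>
definition Mi :: "nat \<Rightarrow> ((nat \<Rightarrow> alt list) \<Rightarrow> alt) \<Rightarrow> nat \<Rightarrow> real" where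
  "Mi n F i =
     real (card {(x, y). x \<in> profiles n \<and> y \<in> L3 \<and>
                         prefers (x i) (F (x(i := y))) (F x)})
     / (real (card (profiles n)) * real (card L3))"

end

theory Submission
  imports Defs
begin

text \<open>
  Condition on the a-versus-b preference vector: the correlated profile x' in
  Mab then ranges over a class of profiles in which every voter independently chooses one
  of the three rankings that compare a and b as in x. Such a class is a product space, and
  Mab is the average over classes of (#profiles with outcome a) * (#profiles with outcome b)
  divided by the class size squared. Any two distinct rankings in the same factor form a
  "good pair": every change of the outcome away from a or b caused by switching between them
  is a profitable manipulation for one of the two rankings. A Chebyshev-type inequality and
  induction on the number of voters then bound the product of the two counts by the number
  of manipulations inside the class. Summing over classes gives Mab <= 2 * sum of the M_i,
  which implies the stated bound with constant 6.
\<close>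

text \<open>If two numbers of absolute value at most N are both bounded above by D >= 0, then
  their product is at least -N*D: a negative product needs one positive factor (at most D)
  and one negative factor (of size at most N).\<close>

lemma neg_mult_le:
  fixes x y N D :: real
  assumes "\<bar>x\<bar> \<le> N" "\<bar>y\<bar> \<le> N" "x \<le> D" "y \<le> D" "0 \<le> D"
  shows "- (x * y) \<le> N * D"
proof (cases "0 \<le> x * y")
  case True
  then show ?thesis using assms by (smt (verit) mult_nonneg_nonneg abs_ge_zero)
next
  case False
  then consider "0 \<le> x" "y < 0" | "x < 0" "0 \<le> y"
    by (smt (verit) mult_nonneg_nonneg mult_nonpos_nonpos)
  then show ?thesis
  proof cases
    case 1
    then have "x * (- y) \<le> D * N" using assms by (intro mult_mono) auto
    then show ?thesis by (simp add: mult.commute)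
  next
    case 2
    then have "(- x) * y \<le> N * D" using assms by (intro mult_mono) auto
    then show ?thesis by simp
  qed
qed

text \<open>The classical identity behind Chebyshev's sum inequality.\<close>

lemma sum_pair_differences:
  fixes \<alpha> \<beta> :: "'a \<Rightarrow> real"
  shows "(\<Sum>t\<in>T. \<Sum>u\<in>T. (\<alpha> t - \<alpha> u) * (\<beta> t - \<beta> u))
     = 2 * real (card T) * (\<Sum>t\<in>T. \<alpha> t * \<beta> t) - 2 * ((\<Sum>t\<in>T. \<alpha> t) * (\<Sum>t\<in>T. \<beta> t))"
proof -
  have "(\<Sum>t\<in>T. \<Sum>u\<in>T. (\<alpha> t - \<alpha> u) * (\<beta> t - \<beta> u))
     = (\<Sum>t\<in>T. \<Sum>u\<in>T. \<alpha> t * \<beta> t) - (\<Sum>t\<in>T. \<Sum>u\<in>T. \<alpha> t * \<beta> u)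
       - (\<Sum>t\<in>T. \<Sum>u\<in>T. \<alpha> u * \<beta> t) + (\<Sum>t\<in>T. \<Sum>u\<in>T. \<alpha> u * \<beta> u)"
    by (simp add: algebra_simps sum.distrib sum_subtractf)
  also have "(\<Sum>t\<in>T. \<Sum>u\<in>T. \<alpha> u * \<beta> t) = (\<Sum>t\<in>T. \<Sum>u\<in>T. \<alpha> t * \<beta> u)"
    by (rule sum.swap)
  also have "(\<Sum>t\<in>T. \<Sum>u\<in>T. \<alpha> u * \<beta> u) = (\<Sum>t\<in>T. \<Sum>u\<in>T. \<alpha> t * \<beta> t)"
    by (rule sum.swap)
  also have "(\<Sum>t\<in>T. \<Sum>u\<in>T. \<alpha> t * \<beta> u) = (\<Sum>t\<in>T. \<alpha> t) * (\<Sum>t\<in>T. \<beta> t)"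
    by (simp add: sum_product)
  also have "(\<Sum>t\<in>T. \<Sum>u\<in>T. \<alpha> t * \<beta> t) = real (card T) * (\<Sum>t\<in>T. \<alpha> t * \<beta> t)"
    by (simp add: sum_distrib_left)
  finally show ?thesis by simp
qed

text \<open>A Chebyshev-type inequality. This is the one-voter step of the main induction.\<close>

lemma product_of_sums_le:
  fixes \<alpha> \<beta> :: "'a \<Rightarrow> real" and m :: "'a \<Rightarrow> 'a \<Rightarrow> real"
  assumes bounds: "\<And>t. t \<in> T \<Longrightarrow> 0 \<le> \<alpha> t \<and> \<alpha> t \<le> N \<and> 0 \<le> \<beta> t \<and> \<beta> t \<le> N"
    and m_nonneg: "\<And>t u. t \<in> T \<Longrightarrow> u \<in> T \<Longrightarrow> 0 \<le> m t u"
    and increments: "\<And>t u. t \<in> T \<Longrightarrow> u \<in> T \<Longrightarrow> t \<noteq> u \<Longrightarrow>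
        (\<alpha> t - \<alpha> u \<le> m t u + m u t \<and> \<beta> t - \<beta> u \<le> m t u + m u t) \<or>
        (\<alpha> u - \<alpha> t \<le> m t u + m u t \<and> \<beta> u - \<beta> t \<le> m t u + m u t)"
  shows "(\<Sum>t\<in>T. \<alpha> t) * (\<Sum>t\<in>T. \<beta> t)
     \<le> real (card T) * (\<Sum>t\<in>T. \<alpha> t * \<beta> t) + N * (\<Sum>t\<in>T. \<Sum>u\<in>T. m t u)"
proof -
  have pair: "- ((\<alpha> t - \<alpha> u) * (\<beta> t - \<beta> u)) \<le> N * (m t u + m u t)"
    if "t \<in> T" "u \<in> T" for t u
  proof (cases "t = u")
    case True
    then show ?thesis using bounds[of t] m_nonneg[of t t] that by simp
  next
    case False
    have "\<bar>\<alpha> t - \<alpha> u\<bar> \<le> N" "\<bar>\<beta> t - \<beta> u\<bar> \<le> N" "0 \<le> m t u + m u t"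
      using bounds[of t] bounds[of u] m_nonneg that by auto
    with increments[OF that False] show ?thesis
      using neg_mult_le[of "\<alpha> t - \<alpha> u" N "\<beta> t - \<beta> u" "m t u + m u t"]
        neg_mult_le[of "\<alpha> u - \<alpha> t" N "\<beta> u - \<beta> t" "m t u + m u t"]
      by (auto simp: abs_minus_commute algebra_simps)
  qed
  have "- (\<Sum>t\<in>T. \<Sum>u\<in>T. (\<alpha> t - \<alpha> u) * (\<beta> t - \<beta> u))
      \<le> (\<Sum>t\<in>T. \<Sum>u\<in>T. N * (m t u + m u t))"
    unfolding sum_negf[symmetric] by (intro sum_mono pair)
  also have "\<dots> = N * ((\<Sum>t\<in>T. \<Sum>u\<in>T. m t u) + (\<Sum>t\<in>T. \<Sum>u\<in>T. m u t))"
    by (simp only: sum.distrib sum_distrib_left distrib_left)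
  also have "(\<Sum>t\<in>T. \<Sum>u\<in>T. m u t) = (\<Sum>t\<in>T. \<Sum>u\<in>T. m t u)"
    by (rule sum.swap)
  finally show ?thesis unfolding sum_pair_differences by (simp add: algebra_simps)
qed

text \<open>Rankings t and u of one voter form a good pair for a and b if every change of the
  outcome from a or b to some other alternative y, caused by switching the report from t to u,
  is a profitable manipulation either for a voter with true ranking t (who prefers y) or for
  a voter with true ranking u (who prefers the old outcome).\<close>

definition good_pair :: "('r \<Rightarrow> 'v \<Rightarrow> 'v \<Rightarrow> bool) \<Rightarrow> 'v \<Rightarrow> 'v \<Rightarrow> 'r \<Rightarrow> 'r \<Rightarrow> bool" where
  "good_pair pref a b t u \<longleftrightarrow>
     (\<forall>x y. (x = a \<or> x = b) \<and> y \<noteq> x \<longrightarrow> pref t y x \<or> pref u x y)"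

lemma good_pair_indicator:
  assumes "good_pair pref a b t u" and "c = a \<or> c = b"
  shows "of_bool (x = c) - of_bool (y = c) \<le> of_bool (pref t y x) + (of_bool (pref u x y) :: real)"
  using assms unfolding good_pair_def by (cases "x = c"; cases "y = c") force+

definition outcome_count :: "('p \<Rightarrow> 'v) \<Rightarrow> 'v \<Rightarrow> 'p set \<Rightarrow> real" where
  "outcome_count G c \<Omega> = (\<Sum>p\<in>\<Omega>. of_bool (G p = c))"

definition manip_count ::
    "('r \<Rightarrow> 'v \<Rightarrow> 'v \<Rightarrow> bool) \<Rightarrow> ((nat \<Rightarrow> 'r) \<Rightarrow> 'v) \<Rightarrow> 'r set \<Rightarrow> nat \<Rightarrow> (nat \<Rightarrow> 'r) \<Rightarrow> real" where
  "manip_count pref G R i p = (\<Sum>r\<in>R. of_bool (pref (p i) (G (p(i := r))) (G p)))"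

lemma outcome_count_bounds: "finite \<Omega> \<Longrightarrow> 0 \<le> outcome_count G c \<Omega> \<and> outcome_count G c \<Omega> \<le> real (card \<Omega>)"
  unfolding outcome_count_def
  using sum_mono[of \<Omega> "\<lambda>p. of_bool (G p = c) :: real" "\<lambda>_. 1"] by (simp add: sum_nonneg)

lemma outcome_count_card: "finite \<Omega> \<Longrightarrow> outcome_count G c \<Omega> = real (card {p \<in> \<Omega>. G p = c})"
  unfolding outcome_count_def by (simp add: Int_def[symmetric] sum.inter_restrict[symmetric] Collect_conj_eq)

lemma outcome_count_difference:
  assumes "good_pair pref a b t u" "c = a \<or> c = b"
  shows "outcome_count X c \<Omega> - outcome_count Y c \<Omega>
     \<le> (\<Sum>q\<in>\<Omega>. of_bool (pref t (Y q) (X q))) + (\<Sum>q\<in>\<Omega>. of_bool (pref u (X q) (Y q)))"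
  unfolding outcome_count_def sum_subtractf[symmetric] sum.distrib[symmetric]
  by (intro sum_mono good_pair_indicator[OF assms])

lemma sum_PiE_Suc:
  "(\<Sum>p\<in>PiE {..<Suc n} C. (\<phi> p :: real)) = (\<Sum>t\<in>C n. \<Sum>q\<in>PiE {..<n} C. \<phi> (q(n := t)))"
proof -
  have split: "PiE {..<Suc n} C = (\<lambda>(t, q). q(n := t)) ` (C n \<times> PiE {..<n} C)"
    using PiE_insert_eq[of n "{..<n}" C] by (simp add: lessThan_Suc)
  have inj: "inj_on (\<lambda>(t, q). q(n := t)) (C n \<times> PiE {..<n} C)"
    by (rule inj_combinator) simp
  show ?thesis
    unfolding split sum.reindex[OF inj] sum.cartesian_product by (simp add: case_prod_beta comp_def)
qed

lemma manip_sum_PiE_Suc: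
  "i < n \<Longrightarrow> (\<Sum>p\<in>PiE {..<Suc n} C. manip_count pref G (C i) i p)
     = (\<Sum>t\<in>C n. \<Sum>q\<in>PiE {..<n} C. manip_count pref (\<lambda>q. G (q(n := t))) (C i) i q)"
  unfolding manip_count_def sum_PiE_Suc by (simp add: fun_upd_twist)

lemma manip_sum_PiE_Suc_last:
  "(\<Sum>p\<in>PiE {..<Suc n} C. manip_count pref G (C n) n p)
     = (\<Sum>t\<in>C n. \<Sum>u\<in>C n. \<Sum>q\<in>PiE {..<n} C. of_bool (pref t (G (q(n := u))) (G (q(n := t)))))"
  unfolding manip_count_def sum_PiE_Suc by (simp add: sum.swap[of _ "PiE {..<n} C"])

text \<open>The proof is by induction on the
  number of voters; the last voter is handled by product_of_sums_le, the others by the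
  induction hypothesis applied with the last report fixed.\<close>

lemma outcome_product_le_manipulation:
  fixes C :: "nat \<Rightarrow> 'r set" and G :: "(nat \<Rightarrow> 'r) \<Rightarrow> 'v"
  assumes ab: "a \<noteq> b" and fin: "\<And>i. finite (C i)" and nonempty: "\<And>i. C i \<noteq> {}"
    and good: "\<And>i t u. t \<in> C i \<Longrightarrow> u \<in> C i \<Longrightarrow> t \<noteq> u \<Longrightarrow>
                 good_pair pref a b t u \<or> good_pair pref a b u t"
  shows "outcome_count G a (PiE {..<n} C) * outcome_count G b (PiE {..<n} C)
     \<le> real (card (PiE {..<n} C)) *
        (\<Sum>i<n. (\<Sum>p\<in>PiE {..<n} C. manip_count pref G (C i) i p) / real (card (C i)))"
proof (induction n arbitrary: G)
  case 0
  have "PiE {..<0} C = {\<lambda>_. undefined}" by simp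
  then show ?case unfolding outcome_count_def using ab
    by (simp only: sum.insert_if finite.emptyI sum.empty) auto
next
  case (Suc n)
  define \<Omega> where "\<Omega> = PiE {..<n} C"
  define k where "k = real (card (C n))"
  define N where "N = real (card \<Omega>)"
  define \<alpha> where "\<alpha> t = outcome_count (\<lambda>q. G (q(n := t))) a \<Omega>" for t
  define \<beta> where "\<beta> t = outcome_count (\<lambda>q. G (q(n := t))) b \<Omega>" for t
  define M where "M i t = (\<Sum>q\<in>\<Omega>. manip_count pref (\<lambda>q. G (q(n := t))) (C i) i q)" for i t
  define m where "m t u = (\<Sum>q\<in>\<Omega>. of_bool (pref t (G (q(n := u))) (G (q(n := t)))) :: real)" for t u
  have fin_\<Omega>: "finite \<Omega>" unfolding \<Omega>_def by (simp add: fin finite_PiE)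
  have k_pos: "k > 0" unfolding k_def using fin nonempty by (simp add: card_gt_0_iff)
  have IH: "\<alpha> t * \<beta> t \<le> N * (\<Sum>i<n. M i t / real (card (C i)))" for t
    using Suc.IH[of "\<lambda>q. G (q(n := t))"] unfolding \<alpha>_def \<beta>_def M_def N_def \<Omega>_def .
  \<comment> \<open>last voter: compare the reports t, u of voter n through the good-pair property\<close>
  have chebyshev: "(\<Sum>t\<in>C n. \<alpha> t) * (\<Sum>t\<in>C n. \<beta> t)
      \<le> k * (\<Sum>t\<in>C n. \<alpha> t * \<beta> t) + N * (\<Sum>t\<in>C n. \<Sum>u\<in>C n. m t u)"
    unfolding k_def
  proof (rule product_of_sums_le)
    fix t u assume "t \<in> C n" "u \<in> C n" "t \<noteq> u"
    have "\<alpha> t - \<alpha> u \<le> m t u + m u t \<and> \<beta> t - \<beta> u \<le> m t u + m u t" if "good_pair pref a b t u" for t u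
      using outcome_count_difference[OF that] unfolding \<alpha>_def \<beta>_def m_def by blast
    with good[OF \<open>t \<in> C n\<close> \<open>u \<in> C n\<close> \<open>t \<noteq> u\<close>]
    show "(\<alpha> t - \<alpha> u \<le> m t u + m u t \<and> \<beta> t - \<beta> u \<le> m t u + m u t) \<or>
          (\<alpha> u - \<alpha> t \<le> m t u + m u t \<and> \<beta> u - \<beta> t \<le> m t u + m u t)"
      by (metis add.commute)
  qed (auto simp: \<alpha>_def \<beta>_def N_def m_def outcome_count_bounds fin_\<Omega> sum_nonneg)
  \<comment> \<open>earlier voters: the induction hypothesis for every fixed report of voter n\<close>
  have "k * (\<Sum>t\<in>C n. \<alpha> t * \<beta> t) \<le> k * (\<Sum>t\<in>C n. N * (\<Sum>i<n. M i t / real (card (C i))))"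
    using k_pos IH by (intro mult_left_mono sum_mono) auto
  also have "\<dots> = k * N * (\<Sum>i<n. (\<Sum>t\<in>C n. M i t) / real (card (C i)))"
    by (simp add: sum_distrib_left sum_divide_distrib sum.swap[of _ "C n"] mult.assoc)
  finally have bound: "(\<Sum>t\<in>C n. \<alpha> t) * (\<Sum>t\<in>C n. \<beta> t)
      \<le> k * N * (\<Sum>i<n. (\<Sum>t\<in>C n. M i t) / real (card (C i))) + N * (\<Sum>t\<in>C n. \<Sum>u\<in>C n. m t u)"
    using chebyshev by linarith
  have count_split: "outcome_count G c (PiE {..<Suc n} C) = (\<Sum>t\<in>C n. outcome_count (\<lambda>q. G (q(n := t))) c \<Omega>)" for c
    unfolding outcome_count_def \<Omega>_def by (rule sum_PiE_Suc)
  have card_split: "real (card (PiE {..<Suc n} C)) = k * N"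
    unfolding k_def N_def \<Omega>_def by (simp add: card_PiE lessThan_Suc)
  show ?case
    using bound k_pos
    by (simp add: count_split card_split manip_sum_PiE_Suc manip_sum_PiE_Suc_last
        M_def m_def \<Omega>_def[symmetric] \<alpha>_def \<beta>_def k_def[symmetric] distrib_left)
qed

lemma prefers_three:
  "prefers [x, y, z] u v \<longleftrightarrow> (u = x \<and> v = y) \<or> (u = x \<and> v = z) \<or> (u = y \<and> v = z)"
proof -
  have index_pairs: "(\<exists>i j. i < j \<and> j < 3 \<and> P i j) \<longleftrightarrow> P 0 1 \<or> P 0 2 \<or> P 1 2"
    for P :: "nat \<Rightarrow> nat \<Rightarrow> bool"
  proof
    assume "\<exists>i j. i < j \<and> j < 3 \<and> P i j"
    then obtain i j where "i < j" "j < 3" "P i j" by blast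
    then have "(i, j) \<in> {(0, 1), (0, 2), (1, 2)}" by auto
    with \<open>P i j\<close> show "P 0 1 \<or> P 0 2 \<or> P 1 2" by auto
  next
    assume "P 0 1 \<or> P 0 2 \<or> P 1 2"
    moreover have "(0::nat) < 1" "(0::nat) < 2" "(1::nat) < 2" "(1::nat) < 3" "(2::nat) < 3"
      by simp_all
    ultimately show "\<exists>i j. i < j \<and> j < 3 \<and> P i j" by blast
  qed
  have "length [x, y, z] = 3" by simp
  then show ?thesis
    unfolding prefers_def using index_pairs[of "\<lambda>i j. [x, y, z] ! i = u \<and> [x, y, z] ! j = v"]
    by (simp only:) (auto simp: eq_commute)
qed

definition rankings :: "alt list list" where
  "rankings = [[A1,A2,A3], [A1,A3,A2], [A2,A1,A3], [A2,A3,A1], [A3,A1,A2], [A3,A2,A1]]"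

lemma L3_rankings: "L3 = set rankings"
proof
  show "set rankings \<subseteq> L3"
    by (auto simp: rankings_def L3_def UNIV_alt)
next
  show "L3 \<subseteq> set rankings"
  proof
    fix r assume "r \<in> L3"
    then have distinct: "distinct r" and all: "set r = UNIV" by (auto simp: L3_def)
    then have "length r = 3" using distinct_card[OF distinct] by (simp add: UNIV_alt)
    then obtain x y z where r: "r = [x, y, z]"
      by (auto simp: length_Suc_conv numeral_3_eq_3)
    show "r \<in> set rankings"
      using distinct all unfolding r UNIV_alt rankings_def
      by (cases x; cases y; cases z) auto
  qed
qed

lemma card_L3: "card L3 = 6"
  by (simp add: L3_rankings rankings_def)

definition rankings_with :: "alt \<Rightarrow> alt \<Rightarrow> bool \<Rightarrow> alt list set" where
  "rankings_with a b v = {r \<in> L3. prefers r a b = v}"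

lemma card_rankings_with: "a \<noteq> b \<Longrightarrow> card (rankings_with a b v) = 3"
  unfolding rankings_with_def L3_rankings set_filter[symmetric] card_set
  by (cases a; cases b; cases v) (simp_all add: rankings_def prefers_three)

lemma all_alt: "(\<forall>x::alt. P x) \<longleftrightarrow> P A1 \<and> P A2 \<and> P A3"
  by (metis alt.exhaust)

text \<open>The combinatorial fact that makes three alternatives work: two distinct rankings
  comparing a and b in the same way always form a good pair (checked by enumeration).\<close>

lemma good_pair_rankings_with:
  assumes "a \<noteq> b" "t \<in> rankings_with a b v" "u \<in> rankings_with a b v" "t \<noteq> u"
  shows "good_pair prefers a b t u \<or> good_pair prefers a b u t"
proof -
  have "\<forall>t\<in>set rankings. \<forall>u\<in>set rankings. \<forall>a b. a \<noteq> b \<longrightarrow> prefers t a b = prefers u a b \<longrightarrow> t \<noteq> u \<longrightarrow>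
          good_pair prefers a b t u \<or> good_pair prefers a b u t"
    unfolding rankings_def good_pair_def
    by (simp only: list.set insert_iff empty_iff ball_simps all_alt prefers_three alt.distinct
        simp_thms list.inject refl)
  then show ?thesis
    using assms unfolding rankings_with_def L3_rankings by blast
qed

lemma manip_count_mono:
  "R \<subseteq> R' \<Longrightarrow> finite R' \<Longrightarrow> manip_count pref G R i p \<le> manip_count pref G R' i p"
  unfolding manip_count_def by (rule sum_mono2) auto

lemma sum_over_fibres:
  fixes \<kappa> :: "'a \<Rightarrow> 'b" and h :: "'a \<Rightarrow> real"
  assumes fin: "finite P" and fibre_card: "\<And>x. x \<in> P \<Longrightarrow> card {y \<in> P. \<kappa> y = \<kappa> x} = c"
  shows "(\<Sum>x\<in>P. \<Sum>y\<in>{y \<in> P. \<kappa> y = \<kappa> x}. h y) = real c * (\<Sum>x\<in>P. h x)"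
proof -
  have "(\<Sum>x\<in>P. \<Sum>y\<in>{y \<in> P. \<kappa> y = \<kappa> x}. h y) = (\<Sum>x\<in>P. \<Sum>y\<in>P. if \<kappa> y = \<kappa> x then h y else 0)"
    using fin by (simp add: sum.inter_filter)
  also have "\<dots> = (\<Sum>y\<in>P. \<Sum>x\<in>P. if \<kappa> x = \<kappa> y then h y else 0)"
    by (subst sum.swap) (simp add: eq_commute)
  also have "\<dots> = (\<Sum>y\<in>P. \<Sum>x\<in>{x \<in> P. \<kappa> x = \<kappa> y}. h y)"
    by (simp only: sum.inter_filter[OF fin])
  also have "\<dots> = (\<Sum>y\<in>P. real c * h y)"
    by (rule sum.cong) (simp_all add: fibre_card)
  finally show ?thesis by (simp add: sum_distrib_left)
qed

lemma finite_profiles: "finite (profiles n)"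
  by (simp add: profiles_def L3_rankings finite_PiE)

lemma card_profiles: "card (profiles n) = 6 ^ n"
  by (simp add: profiles_def card_PiE card_L3)

text \<open>The profiles with the same a-versus-b preference vector as x. This is the set over
  which the correlated profile x' ranges in the definition of Mab.\<close>

definition ab_class :: "nat \<Rightarrow> alt \<Rightarrow> alt \<Rightarrow> (nat \<Rightarrow> alt list) \<Rightarrow> (nat \<Rightarrow> alt list) set" where
  "ab_class n a b x = {y \<in> profiles n. pairvec n a b y = pairvec n a b x}"

text \<open>Such a class is a product space: each voter keeps their comparison of a and b.\<close>

lemma ab_class_PiE:
  "x \<in> profiles n \<Longrightarrow> ab_class n a b x = PiE {..<n} (\<lambda>i. rankings_with a b (prefers (x i) a b))"
  unfolding ab_class_def profiles_def rankings_with_def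
  by (auto simp: PiE_iff pairvec_def fun_eq_iff extensional_def)

lemma card_ab_class: "a \<noteq> b \<Longrightarrow> x \<in> profiles n \<Longrightarrow> card (ab_class n a b x) = 3 ^ n"
  by (simp add: ab_class_PiE card_PiE card_rankings_with)

text \<open>The core estimate specialised to one class; manipulations within the class are
  in particular manipulations with arbitrary rankings.\<close>

lemma ab_class_manipulation_bound:
  assumes ab: "a \<noteq> b" and x: "x \<in> profiles n"
  shows "outcome_count F a (ab_class n a b x) * outcome_count F b (ab_class n a b x)
     \<le> 3 ^ n / 3 * (\<Sum>i<n. \<Sum>p\<in>ab_class n a b x. manip_count prefers F L3 i p)"
proof -
  define C where "C i = rankings_with a b (prefers (x i) a b)" for i
  have class_PiE: "ab_class n a b x = PiE {..<n} C"
    unfolding C_def using ab_class_PiE[OF x] .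
  have card_C: "card (C i) = 3" for i
    unfolding C_def using card_rankings_with[OF ab] .
  have C_L3: "C i \<subseteq> L3" for i
    unfolding C_def rankings_with_def by auto
  have "outcome_count F a (PiE {..<n} C) * outcome_count F b (PiE {..<n} C)
      \<le> real (card (PiE {..<n} C)) * (\<Sum>i<n. (\<Sum>p\<in>PiE {..<n} C. manip_count prefers F (C i) i p) / real (card (C i)))"
  proof (rule outcome_product_le_manipulation[OF ab])
    show "finite (C i)" "C i \<noteq> {}" for i
      using card_C[of i] by (auto intro: card_ge_0_finite)
    show "good_pair prefers a b t u \<or> good_pair prefers a b u t"
      if "t \<in> C i" "u \<in> C i" "t \<noteq> u" for i t u
      using good_pair_rankings_with[OF ab] that unfolding C_def by blast
  qed
  also have "\<dots> \<le> 3 ^ n * (\<Sum>i<n. (\<Sum>p\<in>PiE {..<n} C. manip_count prefers F L3 i p) / 3)"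
    using C_L3 card_C card_ab_class[OF ab x] unfolding class_PiE
    by (auto intro!: sum_mono divide_right_mono manip_count_mono simp: L3_rankings)
  also have "\<dots> = 3 ^ n / 3 * (\<Sum>i<n. \<Sum>p\<in>PiE {..<n} C. manip_count prefers F L3 i p)"
    by (simp add: sum_divide_distrib[symmetric])
  finally show ?thesis
    unfolding class_PiE .
qed

lemma Mab_eq:
  assumes ab: "a \<noteq> b"
  shows "Mab n F a b
     = (\<Sum>x\<in>profiles n. of_bool (F x = a) * outcome_count F b (ab_class n a b x)) / (3 ^ n * 6 ^ n)"
proof -
  have class_term: "real (card {y \<in> ab_class n a b x. F x = a \<and> F y = b}) / real (card (ab_class n a b x))
      = of_bool (F x = a) * outcome_count F b (ab_class n a b x) / 3 ^ n"
    if "x \<in> profiles n" for x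
  proof -
    have "finite (ab_class n a b x)" unfolding ab_class_def using finite_profiles by simp
    then show ?thesis using card_ab_class[OF ab that] by (simp add: outcome_count_card)
  qed
  have "Mab n F a b
      = (\<Sum>x\<in>profiles n. of_bool (F x = a) * outcome_count F b (ab_class n a b x) / 3 ^ n) / 6 ^ n"
    unfolding Mab_def Let_def ab_class_def[symmetric] card_profiles
    by (simp add: class_term cong: sum.cong)
  then show ?thesis by (simp add: sum_divide_distrib)
qed

lemma Mi_eq: "Mi n F i = (\<Sum>x\<in>profiles n. manip_count prefers F L3 i x) / 6 ^ Suc n"
proof -
  have "{(x, y). x \<in> profiles n \<and> y \<in> L3 \<and> prefers (x i) (F (x(i := y))) (F x)}
      = Sigma (profiles n) (\<lambda>x. L3 \<inter> {y. prefers (x i) (F (x(i := y))) (F x)})"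
    by auto
  then have "real (card {(x, y). x \<in> profiles n \<and> y \<in> L3 \<and> prefers (x i) (F (x(i := y))) (F x)})
      = (\<Sum>x\<in>profiles n. manip_count prefers F L3 i x)"
    using finite_profiles by (simp add: card_SigmaI manip_count_def L3_rankings)
  then show ?thesis unfolding Mi_def by (simp add: card_profiles card_L3)
qed

text \<open>The sharper bound Mab <= 2 * sum of Mi: sum the class estimate over all profiles,
  using that every class has 3^n elements.\<close>

lemma Mab_le_twice_manipulation:
  assumes ab: "a \<noteq> b"
  shows "Mab n F a b \<le> 2 * (\<Sum>i<n. Mi n F i)"
proof -
  define S where "S = ab_class n a b"
  define W where "W i = (\<Sum>x\<in>profiles n. manip_count prefers F L3 i x)" for i
  have fibres: "(\<Sum>x\<in>profiles n. \<Sum>y\<in>S x. h y) = 3 ^ n * (\<Sum>x\<in>profiles n. h x)"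
    for h :: "(nat \<Rightarrow> alt list) \<Rightarrow> real"
    unfolding S_def ab_class_def
    using sum_over_fibres[OF finite_profiles, where \<kappa> = "pairvec n a b" and c = "3 ^ n" and h = h]
      card_ab_class[OF ab]
    by (simp add: ab_class_def)
  have same_class: "S y = S x" if "y \<in> S x" for x y
    using that unfolding S_def ab_class_def by auto
  have "3 ^ n * (\<Sum>x\<in>profiles n. of_bool (F x = a) * outcome_count F b (S x))
      = (\<Sum>x\<in>profiles n. \<Sum>y\<in>S x. of_bool (F y = a) * outcome_count F b (S y))"
    by (rule fibres[symmetric])
  also have "\<dots> = (\<Sum>x\<in>profiles n. outcome_count F a (S x) * outcome_count F b (S x))"
    by (intro sum.cong refl) (simp add: same_class outcome_count_def sum_distrib_right cong: sum.cong)
  also have "\<dots> \<le> (\<Sum>x\<in>profiles n. 3 ^ n / 3 * (\<Sum>i<n. \<Sum>p\<in>S x. manip_count prefers F L3 i p))"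
    unfolding S_def by (intro sum_mono ab_class_manipulation_bound[OF ab])
  also have "\<dots> = 3 ^ n / 3 * (\<Sum>i<n. \<Sum>x\<in>profiles n. \<Sum>p\<in>S x. manip_count prefers F L3 i p)"
    by (simp add: sum_distrib_left sum.swap[of _ "profiles n"])
  also have "\<dots> = 3 ^ n / 3 * (\<Sum>i<n. 3 ^ n * W i)"
    by (simp only: fibres W_def)
  also have "\<dots> = 3 ^ n * (3 ^ n / 3 * (\<Sum>i<n. W i))"
    by (simp add: sum_distrib_left)
  finally have "(\<Sum>x\<in>profiles n. of_bool (F x = a) * outcome_count F b (S x)) \<le> 3 ^ n / 3 * (\<Sum>i<n. W i)"
    by simp
  then show ?thesis
    unfolding Mab_eq[OF ab] Mi_eq W_def[symmetric] S_def[symmetric]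
    by (simp add: sum_divide_distrib[symmetric] field_simps)
qed

theorem lemma3p2:
  fixes n :: nat and F :: "(nat \<Rightarrow> alt list) \<Rightarrow> alt" and a b :: alt
  assumes "a \<noteq> b"
  shows "Mab n F a b \<le> 6 * (\<Sum>i<n. Mi n F i)"
proof -
  have "0 \<le> (\<Sum>i<n. Mi n F i)"
    by (intro sum_nonneg) (simp add: Mi_def)
  with Mab_le_twice_manipulation[OF assms, of n F] show ?thesis by linarith
qed

end
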